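(* Let $q=r^2$ where $r$ is a prime power and let $s$ be a positive integer. Let $C_1,\dots,C_s$ be linear codes of the same length $m$ over $\mathbb{F}_q$. If $A\in M_{s,s}(\mathbb{F}_q)$ satisfies $AA^\dagger=\lambda J_s$ for some nonzero $\lambda\in\mathbb{F}_q$ and $C_i\subseteq C_{s-i+1}^{\perp_H}$ for all $1\le i\le s$, then the matrix-product code $C_A=[C_1,\dots,C_s]\cdot A$ satisfies $C_A\subseteq C_A^{\perp_H}$.
   Context: For $a\in\mathbb{F}_q$, $\overline{a}:=a^r$. For a matrix $A=[a_{ij}]$ over $\mathbb{F}_q$, $A^\dagger:=[\overline{a_{ji}}]$. $J_s$ is the $s\times s$ anti-diagonal matrix with all anti-diagonal entries equal to $1$ and all other entries $0$. The Hermitian inner product on $\mathbb{F}_q^n$ is $\langle u,v\rangle_H=\sum_i u_i\overline{v_i}$, and $C^{\perp_H}$ is the dual of $C$ with respect to it. If $C_i$ has generator matrix $G_i$ and $A=[a_{ij}]\in M_{s,l}(\mathbb{F}_q)$, the matrix-product code $[C_1,\dots,C_s]\cdot A$ is the linear code of length $ml$ generated by the block matrix whose $(i,j)$ block is $a_{ij}G_i$. *)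

theory Defs
  imports Main "HOL-Computational_Algebra.Primes" "HOL-Library.Cardinality"
begin

definition vecs :: "nat \<Rightarrow> (nat \<Rightarrow> 'a::zero) set" where
  "vecs n = {v. \<forall>i\<ge>n. v i = 0}"

definition linear_code :: "nat \<Rightarrow> (nat \<Rightarrow> 'a::field) set \<Rightarrow> bool" where
  "linear_code n C \<longleftrightarrow> C \<subseteq> vecs n \<and> (\<lambda>_. 0) \<in> C \<and>
     (\<forall>u\<in>C. \<forall>v\<in>C. (\<lambda>i. u i + v i) \<in> C) \<and>
     (\<forall>c. \<forall>u\<in>C. (\<lambda>i. c * u i) \<in> C)"

definition conj_r :: "nat \<Rightarrow> 'a::field \<Rightarrow> 'a" where
  "conj_r r a = a ^ r"

definition herm_ip :: "nat \<Rightarrow> nat \<Rightarrow> (nat \<Rightarrow> 'a::field) \<Rightarrow> (nat \<Rightarrow> 'a) \<Rightarrow> 'a" where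
  "herm_ip r n u v = (\<Sum>i<n. u i * conj_r r (v i))"

definition herm_dual :: "nat \<Rightarrow> nat \<Rightarrow> (nat \<Rightarrow> 'a::field) set \<Rightarrow> (nat \<Rightarrow> 'a) set" where
  "herm_dual r n C = {v \<in> vecs n. \<forall>u\<in>C. herm_ip r n u v = 0}"

text \<open>Matrix-product code [C_0,...,C_(s-1)] . A for an s x l matrix A (0-indexed),
  codes of length m. Codeword position j*m + k (j < l, k < m) carries
  sum_i a_ij (c_i)_k, i.e. the row space of the block matrix with blocks a_ij G_i.\<close>
definition mp_code :: "nat \<Rightarrow> nat \<Rightarrow> nat \<Rightarrow> (nat \<Rightarrow> (nat \<Rightarrow> 'a::field) set)
    \<Rightarrow> (nat \<Rightarrow> nat \<Rightarrow> 'a) \<Rightarrow> (nat \<Rightarrow> 'a) set" where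
  "mp_code m s l C A = {w. \<exists>c. (\<forall>i<s. c i \<in> C i) \<and>
      w = (\<lambda>p. if p < m * l then (\<Sum>i<s. A i (p div m) * c i (p mod m)) else 0)}"

definition antidiag :: "nat \<Rightarrow> nat \<Rightarrow> nat \<Rightarrow> 'a::zero_neq_one" where
  "antidiag s i j = (if i < s \<and> j < s \<and> i + j = s - 1 then 1 else 0)"

definition prime_power :: "nat \<Rightarrow> bool" where
  "prime_power r \<longleftrightarrow> (\<exists>p k. prime p \<and> k \<ge> 1 \<and> r = p ^ k)"

end

theory Submission
  imports Defs "HOL-Number_Theory.Residues"
begin

text \<open>Since r is a power of the characteristic, conjugation a \<mapsto> a^r is a ring
  endomorphism. Expanding the Hermitian product of two codewords of [C_1,\<dots>,C_s]\<cdot>A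
  block by block therefore gives \<Sum>_{i,i'} (AA\<dagger>)_{ii'} \<langle>d_i, c_{i'}\<rangle>_H. With AA\<dagger> = \<lambda>J_s only
  the terms with i + i' = s + 1 survive, and these vanish because C_i and C_{s-i+1}
  are Hermitian orthogonal.\<close>

lemma sum_lessThan_mult_div_mod:
  fixes f :: "nat \<Rightarrow> nat \<Rightarrow> 'b::comm_monoid_add"
  shows "(\<Sum>p<m * l. f (p div m) (p mod m)) = (\<Sum>j<l. \<Sum>k<m. f j k)"
proof -
  have "(\<Sum>j<l. \<Sum>k<m. f j k) = (\<Sum>(j, k)\<in>{..<l} \<times> {..<m}. f j k)"
    by (rule sum.cartesian_product)
  also have "\<dots> = (\<Sum>p<m * l. f (p div m) (p mod m))"
  proof (rule sum.reindex_bij_witness[where i = "\<lambda>p. (p div m, p mod m)" and j = "\<lambda>(j, k). j * m + k"])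
    fix jk assume "jk \<in> {..<l} \<times> {..<m}"
    then obtain j k where jk: "jk = (j, k)" "j < l" "k < m" by blast
    have "j * m + k < (j + 1) * m" using jk by simp
    also have "\<dots> \<le> l * m" using jk by (intro mult_le_mono1) simp
    finally show "(\<lambda>(j, k). j * m + k) jk \<in> {..<m * l}" using jk by (simp add: mult.commute)
  qed (auto simp: less_mult_imp_div_less mult.commute intro!: mod_less_divisor gr0I)
  finally show ?thesis ..
qed

lemma CHAR_eq_of_CARD_prime_power:
  assumes "prime p" and "CARD('a::{finite,field}) = p ^ n"
  shows "CHAR('a) = p"
proof -
  have "prime CHAR('a)"
    using finite_imp_CHAR_pos[where 'a = 'a] prime_CHAR_semidom by simp
  moreover have "CHAR('a) dvd p ^ n"
    using CHAR_dvd_CARD[where 'a = 'a] assms(2) by simp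
  ultimately show ?thesis
    using assms(1) prime_dvd_power primes_dvd_imp_eq by blast
qed

lemma conj_r_sum:
  fixes f :: "'b \<Rightarrow> 'a::field"
  assumes "prime CHAR('a)" and "r = CHAR('a) ^ k"
  shows "conj_r r (sum f S) = (\<Sum>i\<in>S. conj_r r (f i))"
  unfolding conj_r_def using assms by (rule freshmans_dream_sum')

lemma conj_r_mult: "conj_r r (x * y) = conj_r r x * conj_r r (y :: 'a::field)"
  unfolding conj_r_def by (rule power_mult_distrib)

definition mp_word :: "nat \<Rightarrow> nat \<Rightarrow> nat \<Rightarrow> (nat \<Rightarrow> nat \<Rightarrow> 'a::field)
    \<Rightarrow> (nat \<Rightarrow> nat \<Rightarrow> 'a) \<Rightarrow> nat \<Rightarrow> 'a" where
  "mp_word m s l A c = (\<lambda>p. if p < m * l then (\<Sum>i<s. A i (p div m) * c i (p mod m)) else 0)"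

lemma mp_code_eq: "mp_code m s l C A = {mp_word m s l A c | c. \<forall>i<s. c i \<in> C i}"
  unfolding mp_code_def mp_word_def by blast

lemma mp_word_in_vecs: "mp_word m s l A c \<in> vecs (m * l)"
  unfolding mp_word_def vecs_def by simp

lemma herm_ip_mp_word:
  fixes A c d :: "nat \<Rightarrow> nat \<Rightarrow> 'a::field"
  assumes "prime CHAR('a)" and "r = CHAR('a) ^ k"
  shows "herm_ip r (m * l) (mp_word m s l A d) (mp_word m s l A c)
       = (\<Sum>i<s. \<Sum>i'<s. (\<Sum>j<l. A i j * conj_r r (A i' j)) * herm_ip r m (d i) (c i'))"
proof -
  let ?x = "\<lambda>j k i i'. (A i j * conj_r r (A i' j)) * (d i k * conj_r r (c i' k))"
  have "herm_ip r (m * l) (mp_word m s l A d) (mp_word m s l A c)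
      = (\<Sum>p<m * l. (\<Sum>i<s. A i (p div m) * d i (p mod m))
                     * conj_r r (\<Sum>i'<s. A i' (p div m) * c i' (p mod m)))"
    unfolding herm_ip_def mp_word_def by (rule sum.cong) simp_all
  also have "\<dots> = (\<Sum>j<l. \<Sum>k<m. (\<Sum>i<s. A i j * d i k) * conj_r r (\<Sum>i'<s. A i' j * c i' k))"
    by (rule sum_lessThan_mult_div_mod)
  also have "\<dots> = (\<Sum>j<l. \<Sum>k<m. \<Sum>i<s. \<Sum>i'<s. ?x j k i i')"
    unfolding conj_r_sum[OF assms] conj_r_mult sum_product by (simp add: ac_simps)
  also have "\<dots> = (\<Sum>i<s. \<Sum>i'<s. \<Sum>j<l. \<Sum>k<m. ?x j k i i')"
    by (simp only: sum.swap[of _ "{..<m}"] sum.swap[of _ "{..<l}" "{..<s}"])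
  also have "\<dots> = (\<Sum>i<s. \<Sum>i'<s. (\<Sum>j<l. A i j * conj_r r (A i' j)) * herm_ip r m (d i) (c i'))"
    by (simp add: herm_ip_def sum_product)
  finally show ?thesis .
qed

lemma mp_code_subset_herm_dual:
  fixes A :: "nat \<Rightarrow> nat \<Rightarrow> 'a::field"
  assumes "prime CHAR('a)" and "r = CHAR('a) ^ k"
    and orth: "\<And>i i'. i < s \<Longrightarrow> i' < s \<Longrightarrow> (\<Sum>j<l. A i j * conj_r r (A i' j)) \<noteq> 0
                 \<Longrightarrow> C i' \<subseteq> herm_dual r m (C i)"
  shows "mp_code m s l C A \<subseteq> herm_dual r (m * l) (mp_code m s l C A)"
proof
  fix w assume "w \<in> mp_code m s l C A"
  then obtain c where c: "\<forall>i<s. c i \<in> C i" and w: "w = mp_word m s l A c"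
    unfolding mp_code_eq by blast
  have "herm_ip r (m * l) (mp_word m s l A d) w = 0" if d: "\<forall>i<s. d i \<in> C i" for d
  proof -
    have "(\<Sum>j<l. A i j * conj_r r (A i' j)) * herm_ip r m (d i) (c i') = 0"
      if "i < s" "i' < s" for i i'
      using orth[OF that] c d that unfolding herm_dual_def by fastforce
    then show ?thesis
      unfolding w herm_ip_mp_word[OF assms(1,2)] by (auto intro!: sum.neutral)
  qed
  then show "w \<in> herm_dual r (m * l) (mp_code m s l C A)"
    unfolding herm_dual_def mp_code_eq w by (auto simp: mp_word_in_vecs)
qed

theorem corollary3p2:
  fixes r s m :: nat
    and C :: "nat \<Rightarrow> (nat \<Rightarrow> 'a::{finite,field}) set"
    and A :: "nat \<Rightarrow> nat \<Rightarrow> 'a"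
    and lam :: 'a
  assumes "prime_power r"
    and "CARD('a) = r ^ 2"
    and "s \<ge> 1"
    and "\<forall>i<s. linear_code m (C i)"
    and "lam \<noteq> 0"
    and "\<forall>i<s. \<forall>j<s. (\<Sum>k<s. A i k * conj_r r (A j k)) = lam * antidiag s i j"
    and "\<forall>i<s. C i \<subseteq> herm_dual r m (C (s - 1 - i))"
  shows "mp_code m s s C A \<subseteq> herm_dual r (m * s) (mp_code m s s C A)"
proof -
  obtain p k where p: "prime p" and r: "r = p ^ k"
    using assms(1) unfolding prime_power_def by blast
  have "CHAR('a) = p"
    using p assms(2) by (intro CHAR_eq_of_CARD_prime_power) (simp_all add: r power_mult[symmetric])
  moreover have "C i' \<subseteq> herm_dual r m (C i)"
    if "i < s" "i' < s" "(\<Sum>j<s. A i j * conj_r r (A i' j)) \<noteq> 0" for i i'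
  proof -
    have "i = s - 1 - i'"
      using that assms(6) by (auto simp: antidiag_def split: if_splits)
    then show ?thesis using that(2) assms(7) by simp
  qed
  ultimately show ?thesis
    using p r by (intro mp_code_subset_herm_dual) auto
qed

end
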